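(* Consider the Normal Partizan Domination game on the complete bipartite graph $K_{s,t}$ with parts $S$ and $T$, $|S|=s\geq 2$, $|T|=t\geq 2$, each vertex colored $A$, $B$ or $C$. If every vertex of $S\cup T$ has color $A$ (resp. $B$), the value is $\max\{s,t\}$ (resp. $-\max\{s,t\}$). If each of $S$ and $T$ contains (i) at least one vertex of color $C$ or (ii) at least one vertex of color $A$ and at least one vertex of color $B$, then the value is $0$. If every vertex of $S$ has color $A$ (resp. $B$) and every vertex of $T$ has color $B$ (resp. $A$), then the value is $0$.
   Context: Normal Partizan Domination game: a finite graph $G$ has each vertex colored $A$, $B$ or $C$. Alice and Bob alternately select a vertex; Alice may only select vertices colored $A$ or $C$, Bob only vertices colored $B$ or $C$. A vertex $u$ dominates $v$ if $u=v$ or $uv$ is an edge. A vertex may be selected only if it is playable, i.e. it dominates at least one vertex not dominated by the previously selected vertices; the game ends when the selected vertices form a dominating set. Under normal play the player unable to move loses. The game is regarded as a partizan combinatorial game with Alice as Left and Bob as Right, and its value is its value in Conway's combinatorial game theory ($\{X\mid Y\}$ has Left options $X$ and Right options $Y$; $G=H$ iff $G+(-H)$ is a second-player win; integers $n$ are the usual integer games, $0=\{\mid\}$). *)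

theory Defs
  imports Main "HOL-Library.FSet"
begin

datatype game = Game (lopts: "game fset") (ropts: "game fset")

primrec neg :: "game \<Rightarrow> game" where
  "neg (Game L R) = Game (neg |`| R) (neg |`| L)"

lemma size_lopt: "x |\<in>| L \<Longrightarrow> size x < size (Game L R)"
proof -
  assume "x |\<in>| L"
  hence "Suc (size x) \<le> (\<Sum>y\<in>fset L. Suc (size y))"
    using member_le_sum[of x "fset L" "\<lambda>y. Suc (size y)"] by simp
  thus ?thesis by (simp only: game.size size_fset_simps)
qed

lemma size_ropt: "x |\<in>| R \<Longrightarrow> size x < size (Game L R)"
proof -
  assume "x |\<in>| R"
  hence "Suc (size x) \<le> (\<Sum>y\<in>fset R. Suc (size y))"
    using member_le_sum[of x "fset R" "\<lambda>y. Suc (size y)"] by simp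
  thus ?thesis by (simp only: game.size size_fset_simps)
qed

function add :: "game \<Rightarrow> game \<Rightarrow> game" where
  "add (Game L R) (Game L' R') =
     Game ((\<lambda>x. add x (Game L' R')) |`| L |\<union>| (\<lambda>y. add (Game L R) y) |`| L')
          ((\<lambda>x. add x (Game L' R')) |`| R |\<union>| (\<lambda>y. add (Game L R) y) |`| R')"
  by pat_completeness auto
termination
  by (relation "measure (\<lambda>(x,y). size x + size y)")
     (auto dest: size_lopt[of _ _ R for R] size_ropt[of _ _ L for L])

text \<open>Normal play: \<open>wins True G\<close> means Left, moving first in G, has a winning strategy;
  \<open>wins False G\<close> means Right, moving first in G, has a winning strategy.\<close>
function wins :: "bool \<Rightarrow> game \<Rightarrow> bool" where
  "wins True (Game L R) = (\<exists>g\<in>fset L. \<not> wins False g)"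
| "wins False (Game L R) = (\<exists>g\<in>fset R. \<not> wins True g)"
  by pat_completeness auto
termination
  by (relation "measure (\<lambda>(b, g). size g)") (auto dest: size_lopt size_ropt)

definition second_player_win :: "game \<Rightarrow> bool" where
  "second_player_win G \<longleftrightarrow> \<not> wins True G \<and> \<not> wins False G"

definition game_eq :: "game \<Rightarrow> game \<Rightarrow> bool" where
  "game_eq G H \<longleftrightarrow> second_player_win (add G (neg H))"

primrec nat_game :: "nat \<Rightarrow> game" where
  "nat_game 0 = Game {||} {||}"
| "nat_game (Suc n) = Game {|nat_game n|} {||}"

definition int_game :: "int \<Rightarrow> game" where
  "int_game n = (if 0 \<le> n then nat_game (nat n) else neg (nat_game (nat (- n))))"

datatype color = ColA | ColB | ColC

definition dominates :: "('v \<Rightarrow> 'v \<Rightarrow> bool) \<Rightarrow> 'v \<Rightarrow> 'v \<Rightarrow> bool" where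
  "dominates E u v \<longleftrightarrow> u = v \<or> E u v"

text \<open>D is the set of vertices dominated by the previously selected vertices.\<close>
definition playable :: "'v fset \<Rightarrow> ('v \<Rightarrow> 'v \<Rightarrow> bool) \<Rightarrow> 'v set \<Rightarrow> 'v \<Rightarrow> bool" where
  "playable V E D v \<longleftrightarrow> v |\<in>| V \<and> (\<exists>u. u |\<in>| V \<and> dominates E v u \<and> u \<notin> D)"

definition alice_may :: "color \<Rightarrow> bool" where
  "alice_may c \<longleftrightarrow> c = ColA \<or> c = ColC"

definition bob_may :: "color \<Rightarrow> bool" where
  "bob_may c \<longleftrightarrow> c = ColB \<or> c = ColC"

lemma dom_pos_dec:
  assumes "playable V E D v"
  shows "card (fset V - (D \<union> {u. u |\<in>| V \<and> dominates E v u})) < card (fset V - D)"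
proof -
  obtain u where u: "u |\<in>| V" "dominates E v u" "u \<notin> D"
    using assms by (auto simp: playable_def)
  have "fset V - (D \<union> {u. u |\<in>| V \<and> dominates E v u}) \<subset> fset V - D"
    using u by auto
  thus ?thesis by (rule psubset_card_mono[rotated]) simp
qed

function dom_pos :: "'v fset \<Rightarrow> ('v \<Rightarrow> 'v \<Rightarrow> bool) \<Rightarrow> ('v \<Rightarrow> color) \<Rightarrow> 'v set \<Rightarrow> game" where
  "dom_pos V E col D =
     Game ((\<lambda>v. dom_pos V E col (D \<union> {u. u |\<in>| V \<and> dominates E v u}))
             |`| ffilter (\<lambda>v. alice_may (col v) \<and> playable V E D v) V)
          ((\<lambda>v. dom_pos V E col (D \<union> {u. u |\<in>| V \<and> dominates E v u}))
             |`| ffilter (\<lambda>v. bob_may (col v) \<and> playable V E D v) V)"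
  by auto
termination
  by (relation "measure (\<lambda>(V, E, col, D). card (fset V - D))") (auto intro: dom_pos_dec)

definition dom_game :: "'v fset \<Rightarrow> ('v \<Rightarrow> 'v \<Rightarrow> bool) \<Rightarrow> ('v \<Rightarrow> color) \<Rightarrow> game" where
  "dom_game V E col = dom_pos V E col {}"

definition kbip :: "'v fset \<Rightarrow> 'v fset \<Rightarrow> 'v \<Rightarrow> 'v \<Rightarrow> bool" where
  "kbip S T x y \<longleftrightarrow> (x |\<in>| S \<and> y |\<in>| T) \<or> (x |\<in>| T \<and> y |\<in>| S)"

end

theory Submission
  imports Defs
begin

text \<open>
  In a complete bipartite graph a first move in one part dominates the whole other part,
  so afterwards only the rest of its own part can still be dominated. If every vertex has
  colour A, Right never has a move; such a game equals the integer \<open>n\<close> exactly when the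
  longest run of Left moves has length \<open>n\<close>, and the longest sequence of playable moves
  selects one part vertex by vertex, which gives \<open>max s t\<close>. Exchanging the colours A and B
  negates the game, which gives the all-B case. In the remaining cases every first move can
  be answered by the opponent with a vertex of the other part: since that part has a second
  vertex the answer is still playable, and afterwards all vertices are dominated, so the
  first player is stuck. Hence the game is a second player win, i.e. equal to 0.
\<close>

lemma neg_neg [simp]: "neg (neg G) = G"
  by (induction G) (simp add: fset.map_comp fset.map_ident_strong)

lemma wins_neg: "wins b (neg G) \<longleftrightarrow> wins (\<not> b) G"
proof (induction G arbitrary: b)
  case (Game L R)
  then show ?case by (cases b) auto
qed

lemma neg_add: "neg (add G H) = add (neg G) (neg H)"
proof (induction G H rule: add.induct)
  case (1 L R L' R')
  then show ?case by (simp add: fimage_funion fset.map_comp o_def cong: fimage_cong)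
qed

lemma game_eq_neg_iff: "game_eq (neg G) (neg H) \<longleftrightarrow> game_eq G H"
proof -
  have "add (neg G) (neg (neg H)) = neg (add G (neg H))"
    by (simp add: neg_add)
  then show ?thesis
    by (simp add: game_eq_def second_player_win_def wins_neg conj_commute)
qed

lemma int_game_uminus: "int_game (- k) = neg (int_game k)"
  by (simp add: int_game_def)

lemma add_zero_right: "add G (Game {||} {||}) = G"
  by (induction G) (auto intro: fset.map_ident_strong)

lemma game_eq_zero_iff: "game_eq G (int_game 0) \<longleftrightarrow> second_player_win G"
  by (simp add: game_eq_def int_game_def add_zero_right)

inductive left_only :: "game \<Rightarrow> bool" where
  "(\<And>g. g |\<in>| L \<Longrightarrow> left_only g) \<Longrightarrow> left_only (Game L {||})"

fun left_run :: "game \<Rightarrow> nat \<Rightarrow> bool" where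
  "left_run G 0 = True"
| "left_run G (Suc n) = (\<exists>g\<in>fset (lopts G). left_run g n)"

lemma wins_add_left_first:
  "wins True (add G H) \<longleftrightarrow>
     (\<exists>g\<in>fset (lopts G). \<not> wins False (add g H)) \<or> (\<exists>h\<in>fset (lopts H). \<not> wins False (add G h))"
  by (cases G; cases H) auto

lemma wins_add_right_first:
  "wins False (add G H) \<longleftrightarrow>
     (\<exists>g\<in>fset (ropts G). \<not> wins True (add g H)) \<or> (\<exists>h\<in>fset (ropts H). \<not> wins True (add G h))"
  by (cases G; cases H) auto

lemma lopts_neg_nat_game [simp]: "lopts (neg (nat_game n)) = {||}"
  by (cases n) auto

lemma left_only_wins_minus_nat:
  assumes "left_only G"
  shows "wins True (add G (neg (nat_game n))) \<longleftrightarrow> left_run G (Suc n)"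
    and "wins False (add G (neg (nat_game n))) \<longleftrightarrow> \<not> left_run G n"
proof -
  have "(\<forall>n. wins True (add G (neg (nat_game n))) \<longleftrightarrow> left_run G (Suc n)) \<and>
        (\<forall>n. wins False (add G (neg (nat_game n))) \<longleftrightarrow> \<not> left_run G n)"
    using assms
  proof (induction G rule: left_only.induct)
    case (1 L)
    have left_first: "wins True (add (Game L {||}) (neg (nat_game n))) \<longleftrightarrow> left_run (Game L {||}) (Suc n)"
      for n
      using 1 by (simp add: wins_add_left_first)
    have "wins False (add (Game L {||}) (neg (nat_game n))) \<longleftrightarrow> \<not> left_run (Game L {||}) n" for n
      using left_first by (cases n) (auto simp: wins_add_right_first)
    with left_first show ?case by blast
  qed
  then show "wins True (add G (neg (nat_game n))) \<longleftrightarrow> left_run G (Suc n)"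
    and "wins False (add G (neg (nat_game n))) \<longleftrightarrow> \<not> left_run G n"
    by blast+
qed

lemma left_only_game_eq_nat_game_iff:
  assumes "left_only G"
  shows "game_eq G (nat_game n) \<longleftrightarrow> left_run G n \<and> \<not> left_run G (Suc n)"
  using left_only_wins_minus_nat[OF assms]
  by (auto simp: game_eq_def second_player_win_def)

abbreviation closed_nbhd :: "'v fset \<Rightarrow> ('v \<Rightarrow> 'v \<Rightarrow> bool) \<Rightarrow> 'v \<Rightarrow> 'v set" where
  "closed_nbhd V E v \<equiv> {u. u |\<in>| V \<and> dominates E v u}"

declare dom_pos.simps [simp del]

lemma wins_dom_pos_left_first:
  "wins True (dom_pos V E col D) \<longleftrightarrow>
     (\<exists>v. alice_may (col v) \<and> playable V E D v \<and>
          \<not> wins False (dom_pos V E col (D \<union> closed_nbhd V E v)))"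
  by (subst dom_pos.simps) (auto simp: playable_def)

lemma wins_dom_pos_right_first:
  "wins False (dom_pos V E col D) \<longleftrightarrow>
     (\<exists>v. bob_may (col v) \<and> playable V E D v \<and>
          \<not> wins True (dom_pos V E col (D \<union> closed_nbhd V E v)))"
  by (subst dom_pos.simps) (auto simp: playable_def)

fun dual_color :: "color \<Rightarrow> color" where
  "dual_color ColA = ColB"
| "dual_color ColB = ColA"
| "dual_color ColC = ColC"

lemma alice_may_dual_color [simp]: "alice_may (dual_color c) \<longleftrightarrow> bob_may c"
  by (cases c) (auto simp: alice_may_def bob_may_def)

lemma bob_may_dual_color [simp]: "bob_may (dual_color c) \<longleftrightarrow> alice_may c"
  by (cases c) (auto simp: alice_may_def bob_may_def)

lemma neg_dom_pos: "neg (dom_pos V E col D) = dom_pos V E (dual_color \<circ> col) D"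
proof (induction V E col D rule: dom_pos.induct)
  case (1 V E col D)
  show ?case
    using 1 by (subst (1 2) dom_pos.simps) (auto simp: fset.map_comp o_def intro!: fimage_cong)
qed

lemma left_only_dom_pos:
  assumes "\<forall>v\<in>fset V. col v = ColA"
  shows "left_only (dom_pos V E col D)"
  using assms
proof (induction V E col D rule: dom_pos.induct)
  case (1 V E col D)
  have "ffilter (\<lambda>v. bob_may (col v) \<and> playable V E D v) V = {||}"
    using 1(3) by (auto simp: bob_may_def)
  then show ?case
    using 1 by (subst dom_pos.simps) (auto intro!: left_only.intros)
qed

fun dom_run :: "'v fset \<Rightarrow> ('v \<Rightarrow> 'v \<Rightarrow> bool) \<Rightarrow> 'v set \<Rightarrow> nat \<Rightarrow> bool" where
  "dom_run V E D 0 = True"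
| "dom_run V E D (Suc n) = (\<exists>v. playable V E D v \<and> dom_run V E (D \<union> closed_nbhd V E v) n)"

lemma left_run_dom_pos:
  assumes "\<forall>v\<in>fset V. col v = ColA"
  shows "left_run (dom_pos V E col D) n \<longleftrightarrow> dom_run V E D n"
proof (induction n arbitrary: D)
  case (Suc n)
  then show ?case
    using assms by (subst dom_pos.simps) (auto simp: alice_may_def playable_def)
qed simp

lemma dom_run_mono: "dom_run V E D n \<Longrightarrow> k \<le> n \<Longrightarrow> dom_run V E D k"
proof (induction n arbitrary: D k)
  case (Suc n)
  then show ?case by (cases k) auto
qed simp

lemma dom_run_le_card: "dom_run V E D n \<Longrightarrow> n \<le> card (fset V - D)"
proof (induction n arbitrary: D)
  case (Suc n)
  then obtain v where "playable V E D v" "dom_run V E (D \<union> closed_nbhd V E v) n"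
    by auto
  with Suc.IH[of "D \<union> closed_nbhd V E v"] dom_pos_dec[of V E D v] show ?case
    by linarith
qed simp

lemma dom_run_independent:
  assumes "W \<subseteq> fset V" "W \<inter> D = {}" "\<And>u w. u \<in> W \<Longrightarrow> w \<in> W \<Longrightarrow> u \<noteq> w \<Longrightarrow> \<not> E u w"
  shows "dom_run V E D (card W)"
proof -
  have "finite W"
    using assms(1) finite_fset finite_subset by blast
  then show ?thesis
    using assms
  proof (induction W arbitrary: D rule: finite_induct)
    case (insert u W)
    have "playable V E D u"
      using insert.prems(1,2) unfolding playable_def dominates_def by blast
    moreover have "W \<inter> closed_nbhd V E u = {}"
      using insert.hyps(2) insert.prems(3) unfolding dominates_def by blast
    then have "dom_run V E (D \<union> closed_nbhd V E u) (card W)"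
      using insert.prems by (intro insert.IH) auto
    ultimately show ?case
      using insert.hyps by auto
  qed simp
qed

lemma dom_pos_left_first_loses:
  assumes "\<And>v. alice_may (col v) \<Longrightarrow> playable V E D v \<Longrightarrow>
    \<exists>w. bob_may (col w) \<and> playable V E (D \<union> closed_nbhd V E v) w \<and>
        fset V \<subseteq> D \<union> closed_nbhd V E v \<union> closed_nbhd V E w"
  shows "\<not> wins True (dom_pos V E col D)"
proof
  assume "wins True (dom_pos V E col D)"
  then obtain v where v: "alice_may (col v)" "playable V E D v"
    and Bob_loses: "\<not> wins False (dom_pos V E col (D \<union> closed_nbhd V E v))"
    by (auto simp: wins_dom_pos_left_first)
  obtain w where w: "bob_may (col w)" "playable V E (D \<union> closed_nbhd V E v) w"
    and dominating: "fset V \<subseteq> D \<union> closed_nbhd V E v \<union> closed_nbhd V E w"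
    using assms v by blast
  have "\<not> wins True (dom_pos V E col (D \<union> closed_nbhd V E v \<union> closed_nbhd V E w))"
    using dominating by (auto simp: wins_dom_pos_left_first playable_def)
  with w have "wins False (dom_pos V E col (D \<union> closed_nbhd V E v))"
    by (auto simp: wins_dom_pos_right_first)
  with Bob_loses show False ..
qed

lemma dom_pos_second_player_win:
  assumes "\<And>v. alice_may (col v) \<Longrightarrow> playable V E D v \<Longrightarrow>
    \<exists>w. bob_may (col w) \<and> playable V E (D \<union> closed_nbhd V E v) w \<and>
        fset V \<subseteq> D \<union> closed_nbhd V E v \<union> closed_nbhd V E w"
    and "\<And>v. bob_may (col v) \<Longrightarrow> playable V E D v \<Longrightarrow>
    \<exists>w. alice_may (col w) \<and> playable V E (D \<union> closed_nbhd V E v) w \<and>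
        fset V \<subseteq> D \<union> closed_nbhd V E v \<union> closed_nbhd V E w"
  shows "second_player_win (dom_pos V E col D)"
proof -
  have "\<not> wins True (dom_pos V E (dual_color \<circ> col) D)"
    using assms(2) by (intro dom_pos_left_first_loses) simp
  then have "\<not> wins False (dom_pos V E col D)"
    by (simp flip: neg_dom_pos add: wins_neg)
  with dom_pos_left_first_loses[OF assms(1)] show ?thesis
    by (simp add: second_player_win_def)
qed

lemma kbip_swap: "kbip T S = kbip S T"
  by (auto simp: kbip_def fun_eq_iff)

lemma kbip_closed_nbhd:
  assumes "S |\<inter>| T = {||}" "v |\<in>| S"
  shows "closed_nbhd (S |\<union>| T) (kbip S T) v = insert v (fset T)"
  using assms by (auto simp: dominates_def kbip_def)

lemma kbip_dom_run_after_move: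
  assumes "S |\<inter>| T = {||}" "v |\<in>| S"
    and "dom_run (S |\<union>| T) (kbip S T) (closed_nbhd (S |\<union>| T) (kbip S T) v) n"
  shows "Suc n \<le> fcard S"
proof -
  have "fset (S |\<union>| T) - insert v (fset T) = fset S - {v}"
    using assms(1) by auto
  then have "n \<le> card (fset S - {v})"
    using dom_run_le_card[OF assms(3)] kbip_closed_nbhd[OF assms(1,2)] by simp
  moreover have "card (fset S - {v}) = fcard S - 1" and "fcard S > 0"
    using assms(2) by (auto simp: fcard.rep_eq card_gt_0_iff)
  ultimately show ?thesis
    by linarith
qed

lemma kbip_dom_run_le_max:
  assumes "S |\<inter>| T = {||}" "dom_run (S |\<union>| T) (kbip S T) {} n"
  shows "n \<le> max (fcard S) (fcard T)"
proof (cases n)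
  case (Suc k)
  then obtain v where "playable (S |\<union>| T) (kbip S T) {} v"
    and run: "dom_run (S |\<union>| T) (kbip S T) (closed_nbhd (S |\<union>| T) (kbip S T) v) k"
    using assms(2) by auto
  then consider "v |\<in>| S" | "v |\<in>| T"
    by (auto simp: playable_def)
  then show ?thesis
  proof cases
    case 1
    with kbip_dom_run_after_move[OF assms(1) 1 run] Suc show ?thesis by simp
  next
    case 2
    with kbip_dom_run_after_move[of T S v k] assms(1) run Suc show ?thesis
      by (simp add: finter_commute funion_commute kbip_swap)
  qed
qed simp

lemma kbip_dom_run_fcard:
  assumes "S |\<inter>| T = {||}"
  shows "dom_run (S |\<union>| T) (kbip S T) {} (fcard S)"
proof -
  have "dom_run (S |\<union>| T) (kbip S T) {} (card (fset S))"
    using assms by (intro dom_run_independent) (auto simp: kbip_def)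
  then show ?thesis
    by (simp add: fcard.rep_eq)
qed

lemma kbip_dom_run_iff:
  assumes "S |\<inter>| T = {||}"
  shows "dom_run (S |\<union>| T) (kbip S T) {} n \<longleftrightarrow> n \<le> max (fcard S) (fcard T)"
proof
  have "dom_run (S |\<union>| T) (kbip S T) {} (fcard T)"
    using kbip_dom_run_fcard[of T S] assms by (simp add: finter_commute funion_commute kbip_swap)
  with kbip_dom_run_fcard[OF assms]
  show "n \<le> max (fcard S) (fcard T) \<Longrightarrow> dom_run (S |\<union>| T) (kbip S T) {} n"
    by (metis dom_run_mono max_def)
qed (use assms kbip_dom_run_le_max in blast)

lemma kbip_all_ColA_value:
  assumes "S |\<inter>| T = {||}" "\<forall>v\<in>fset (S |\<union>| T). col v = ColA"
  shows "game_eq (dom_game (S |\<union>| T) (kbip S T) col) (int_game (int (max (fcard S) (fcard T))))"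
proof -
  have "left_run (dom_pos (S |\<union>| T) (kbip S T) col {}) n \<longleftrightarrow> n \<le> max (fcard S) (fcard T)" for n
    using left_run_dom_pos[OF assms(2)] kbip_dom_run_iff[OF assms(1)] by blast
  then show ?thesis
    using left_only_game_eq_nat_game_iff[OF left_only_dom_pos[OF assms(2)]]
    by (simp add: dom_game_def int_game_def del: left_run.simps)
qed

lemma kbip_finishing_reply:
  assumes "S |\<inter>| T = {||}" "fcard S \<ge> 2" "v |\<in>| S" "w |\<in>| T"
  shows "playable (S |\<union>| T) (kbip S T) (closed_nbhd (S |\<union>| T) (kbip S T) v) w"
    and "fset (S |\<union>| T) \<subseteq> closed_nbhd (S |\<union>| T) (kbip S T) v \<union> closed_nbhd (S |\<union>| T) (kbip S T) w"
proof -
  have nbhd_w: "closed_nbhd (S |\<union>| T) (kbip S T) w = insert w (fset S)"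
    using kbip_closed_nbhd[of T S w] assms(1,4) by (simp add: finter_commute funion_commute kbip_swap)
  have "\<not> card (fset S) \<le> Suc 0"
    using assms(2) by (simp add: fcard.rep_eq)
  then obtain u where "u |\<in>| S" "u \<noteq> v"
    using card_le_Suc0_iff_eq[of "fset S"] assms(3) by auto
  then have "u \<notin> insert v (fset T)" "u \<in> closed_nbhd (S |\<union>| T) (kbip S T) w"
    using assms(1) nbhd_w by auto
  then show "playable (S |\<union>| T) (kbip S T) (closed_nbhd (S |\<union>| T) (kbip S T) v) w"
    using assms(4) kbip_closed_nbhd[OF assms(1,3)] unfolding playable_def by auto
  show "fset (S |\<union>| T) \<subseteq> closed_nbhd (S |\<union>| T) (kbip S T) v \<union> closed_nbhd (S |\<union>| T) (kbip S T) w"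
    using kbip_closed_nbhd[OF assms(1,3)] nbhd_w by auto
qed

definition answerable :: "('v \<Rightarrow> color) \<Rightarrow> 'v fset \<Rightarrow> 'v fset \<Rightarrow> bool" where
  "answerable col P Q \<longleftrightarrow>
     ((\<exists>v\<in>fset P. alice_may (col v)) \<longrightarrow> (\<exists>w\<in>fset Q. bob_may (col w))) \<and>
     ((\<exists>v\<in>fset P. bob_may (col v)) \<longrightarrow> (\<exists>w\<in>fset Q. alice_may (col w)))"

lemma kbip_second_player_win:
  assumes "S |\<inter>| T = {||}" "fcard S \<ge> 2" "fcard T \<ge> 2"
    and "answerable col S T" "answerable col T S"
  shows "second_player_win (dom_game (S |\<union>| T) (kbip S T) col)"
proof -
  let ?V = "S |\<union>| T" and ?E = "kbip S T"
  have reply: "playable ?V ?E ({} \<union> closed_nbhd ?V ?E v) w \<and>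
      fset ?V \<subseteq> {} \<union> closed_nbhd ?V ?E v \<union> closed_nbhd ?V ?E w"
    if "v |\<in>| S \<and> w |\<in>| T \<or> v |\<in>| T \<and> w |\<in>| S" for v w
    using that kbip_finishing_reply[of S T v w] kbip_finishing_reply[of T S v w] assms(1-3)
    by (auto simp: finter_commute funion_commute kbip_swap)
  have in_part: "v |\<in>| S \<or> v |\<in>| T" if "playable ?V ?E {} v" for v
    using that by (auto simp: playable_def)
  have alice_answer: "\<exists>w. bob_may (col w) \<and> (v |\<in>| S \<and> w |\<in>| T \<or> v |\<in>| T \<and> w |\<in>| S)"
    if "v |\<in>| S \<or> v |\<in>| T" "alice_may (col v)" for v
    using that assms(4,5) unfolding answerable_def by blast
  have bob_answer: "\<exists>w. alice_may (col w) \<and> (v |\<in>| S \<and> w |\<in>| T \<or> v |\<in>| T \<and> w |\<in>| S)"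
    if "v |\<in>| S \<or> v |\<in>| T" "bob_may (col v)" for v
    using that assms(4,5) unfolding answerable_def by blast
  show ?thesis
    unfolding dom_game_def
    using in_part alice_answer bob_answer reply by (intro dom_pos_second_player_win) meson+
qed

lemma answerable_if_ColC_or_ColA_ColB:
  assumes "(\<exists>w\<in>fset Q. col w = ColC) \<or> ((\<exists>w\<in>fset Q. col w = ColA) \<and> (\<exists>w\<in>fset Q. col w = ColB))"
  shows "answerable col P Q"
  using assms by (auto simp: answerable_def alice_may_def bob_may_def)

lemma answerable_ColA_ColB:
  assumes "\<forall>v\<in>fset P. col v = ColA" "\<forall>w\<in>fset Q. col w = ColB" "P \<noteq> {||}" "Q \<noteq> {||}"
  shows "answerable col P Q" and "answerable col Q P"
  using assms by (auto simp: answerable_def alice_may_def bob_may_def)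

theorem theorem4:
  fixes S T :: "'v fset" and col :: "'v \<Rightarrow> color"
  assumes disj: "S |\<inter>| T = {||}"
    and s2: "fcard S \<ge> 2" and t2: "fcard T \<ge> 2"
  shows
    "((\<forall>v\<in>fset (S |\<union>| T). col v = ColA) \<longrightarrow>
        game_eq (dom_game (S |\<union>| T) (kbip S T) col) (int_game (int (max (fcard S) (fcard T)))))
   \<and> ((\<forall>v\<in>fset (S |\<union>| T). col v = ColB) \<longrightarrow>
        game_eq (dom_game (S |\<union>| T) (kbip S T) col) (int_game (- int (max (fcard S) (fcard T)))))
   \<and> (((\<exists>v\<in>fset S. col v = ColC) \<or> ((\<exists>v\<in>fset S. col v = ColA) \<and> (\<exists>v\<in>fset S. col v = ColB)))
       \<and> ((\<exists>v\<in>fset T. col v = ColC) \<or> ((\<exists>v\<in>fset T. col v = ColA) \<and> (\<exists>v\<in>fset T. col v = ColB)))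
       \<longrightarrow> game_eq (dom_game (S |\<union>| T) (kbip S T) col) (int_game 0))
   \<and> ((\<forall>v\<in>fset S. col v = ColA) \<and> (\<forall>v\<in>fset T. col v = ColB) \<longrightarrow>
        game_eq (dom_game (S |\<union>| T) (kbip S T) col) (int_game 0))
   \<and> ((\<forall>v\<in>fset S. col v = ColB) \<and> (\<forall>v\<in>fset T. col v = ColA) \<longrightarrow>
        game_eq (dom_game (S |\<union>| T) (kbip S T) col) (int_game 0))"
proof -
  let ?G = "dom_game (S |\<union>| T) (kbip S T) col"
  let ?m = "max (fcard S) (fcard T)"
  have all_B: "game_eq ?G (int_game (- int ?m))" if "\<forall>v\<in>fset (S |\<union>| T). col v = ColB"
  proof -
    have "game_eq (dom_game (S |\<union>| T) (kbip S T) (dual_color \<circ> col)) (int_game (int ?m))"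
      using that by (intro kbip_all_ColA_value[OF disj]) simp
    moreover have "neg ?G = dom_game (S |\<union>| T) (kbip S T) (dual_color \<circ> col)"
      by (simp add: dom_game_def neg_dom_pos)
    ultimately show ?thesis
      using game_eq_neg_iff[of ?G "int_game (- int ?m)"] by (simp add: int_game_uminus)
  qed
  have zero: "game_eq ?G (int_game 0)" if "answerable col S T" "answerable col T S"
    using kbip_second_player_win[OF disj s2 t2 that] by (simp add: game_eq_zero_iff)
  have "S \<noteq> {||}" "T \<noteq> {||}"
    using s2 t2 by (auto simp: fcard_fempty)
  then show ?thesis
    using kbip_all_ColA_value[OF disj] all_B
    by (intro conjI impI)
      (blast intro: zero answerable_if_ColC_or_ColA_ColB answerable_ColA_ColB)+
qed

end
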